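(* Let $A$ be a uniformly random $k\times n$ binary matrix, $\mathbf{s}$ a uniformly random $k$-bit binary vector, and $\mathbf{z}=f(\mathbf{s}A)+\mathbf{v}$ where the bits of $\mathbf{v}\in\{0,1\}^D$ are i.i.d. Bernoulli. Let $\mathbf{c}$ be a uniformly random $n$-bit vector chosen independently of everything else. For $i\in\{1,\dots,k\}$, let $A'$ be the matrix obtained from $A$ by replacing its $i$-th row $(A)_i$ with $(A)_i+\mathbf{c}$, and let $hyb_i$ denote the distribution of the bitstring $\langle A',\mathbf{z}\rangle$. If $s_i=1$, then $hyb_i$ is the uniform distribution on $\{0,1\}^{kn+D}$.
   Context: All arithmetic is over $GF(2)$; $+$ denotes XOR. The function $f:\{0,1\}^n\to\{0,1\}^D$: given positive integers $n,p$ with $D=n-p$ and a Boolean function $g:\{0,1\}^p\to\{0,1\}$ whose algebraic normal form contains only non-linear terms (every monomial has degree at least two), $f(\mathbf{x})=\mathbf{y}$ has bits $y_i=x_i+g(x_{i+1},\dots,x_{i+p})$ for $1\le i\le D$. Such $f$ maps the uniform distribution on $\{0,1\}^n$ to the uniform distribution on $\{0,1\}^D$. *)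

theory Defs
  imports "HOL-Probability.Probability"
begin

(* Bits are bool, XOR is (\<noteq>). Bit vectors are bool lists; a k x n matrix is a list of
   k rows, each a bool list of length n. All indices are 0-based. *)

(* Evaluation of an algebraic normal form given as a finite set S of monomials,
   each monomial being a set of variable indices: XOR over M \<in> S of AND_{j \<in> M} x_j *)
definition anf_eval :: "nat set set \<Rightarrow> bool list \<Rightarrow> bool" where
  "anf_eval S xs = odd (card {M \<in> S. \<forall>j\<in>M. xs ! j})"

definition nonlinear_anf :: "nat \<Rightarrow> (bool list \<Rightarrow> bool) \<Rightarrow> bool" where
  "nonlinear_anf p g \<longleftrightarrow> (\<exists>S. finite S \<and> (\<forall>M\<in>S. M \<subseteq> {..<p} \<and> card M \<ge> 2) \<and>
        (\<forall>xs. length xs = p \<longrightarrow> g xs = anf_eval S xs))"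

(* f : {0,1}^n \<rightarrow> {0,1}^D, y_i = x_i + g(x_{i+1},...,x_{i+p}) (0-based), D = n - p *)
definition fmap :: "(bool list \<Rightarrow> bool) \<Rightarrow> nat \<Rightarrow> nat \<Rightarrow> bool list \<Rightarrow> bool list" where
  "fmap g n p x = map (\<lambda>i. x ! i \<noteq> g (take p (drop (i+1) x))) [0..<n-p]"

definition vecmat :: "nat \<Rightarrow> bool list \<Rightarrow> bool list list \<Rightarrow> bool list" where
  "vecmat n s A = map (\<lambda>j. odd (card {l. l < length s \<and> s ! l \<and> A ! l ! j})) [0..<n]"

fun bern_list :: "real \<Rightarrow> nat \<Rightarrow> bool list pmf" where
  "bern_list eta 0 = return_pmf []"
| "bern_list eta (Suc m) = bind_pmf (bernoulli_pmf eta) (\<lambda>b. map_pmf (Cons b) (bern_list eta m))"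

definition bits :: "nat \<Rightarrow> bool list set" where
  "bits m = {xs. length xs = m}"

definition matrices :: "nat \<Rightarrow> nat \<Rightarrow> bool list list set" where
  "matrices k n = {A. length A = k \<and> (\<forall>r\<in>set A. length r = n)}"

definition joint_exp :: "real \<Rightarrow> nat \<Rightarrow> nat \<Rightarrow> nat \<Rightarrow>
    (bool list list \<times> bool list \<times> bool list \<times> bool list) pmf" where
  "joint_exp eta k n D =
     do { A \<leftarrow> pmf_of_set (matrices k n);
          s \<leftarrow> pmf_of_set (bits k);
          v \<leftarrow> bern_list eta D;
          c \<leftarrow> pmf_of_set (bits n);
          return_pmf (A, s, v, c) }"

definition hyb_out :: "(bool list \<Rightarrow> bool) \<Rightarrow> nat \<Rightarrow> nat \<Rightarrow> nat \<Rightarrow>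
    bool list list \<times> bool list \<times> bool list \<times> bool list \<Rightarrow> bool list" where
  "hyb_out g n p i = (\<lambda>(A, s, v, c).
      concat (A[i := map2 (\<noteq>) (A ! i) c]) @ map2 (\<noteq>) (fmap g n p (vecmat n s A)) v)"

definition hyb_given_si :: "real \<Rightarrow> (bool list \<Rightarrow> bool) \<Rightarrow> nat \<Rightarrow> nat \<Rightarrow> nat \<Rightarrow> nat \<Rightarrow> bool list pmf" where
  "hyb_given_si eta g k n p i =
     map_pmf (hyb_out g n p i)
       (cond_pmf (joint_exp eta k n (n - p)) {(A, s, v, c). s ! i})"

end

theory Submission
  imports Defs
begin

text \<open>Conditioned on \<open>s\<^sub>i = 1\<close>, the change of variables \<open>c \<mapsto> u = sA\<close> is a bijection: since
  \<open>sA' = sA + c\<close>, the mask \<open>c\<close> can be recovered from \<open>A'\<close>, \<open>s\<close> and \<open>u\<close>. Hence \<open>A'\<close> and \<open>u = sA\<close> are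
  independent and uniform, and the output \<open>\<langle>A', f(u) + v\<rangle>\<close> is uniform because \<open>f\<close> maps the
  uniform distribution to the uniform one and adding an independent \<open>v\<close> keeps it uniform.\<close>

abbreviation xor_bits :: "bool list \<Rightarrow> bool list \<Rightarrow> bool list" where
  "xor_bits u v \<equiv> map2 (\<noteq>) u v"

lemma xor_bits_cancel_right: "length u = length v \<Longrightarrow> xor_bits (xor_bits u v) v = u"
  by (rule nth_equalityI) auto

lemma xor_bits_cancel_left: "length u = length v \<Longrightarrow> xor_bits (xor_bits u v) u = v"
  by (rule nth_equalityI) auto

lemma finite_bits [simp]: "finite (bits m)"
  using finite_lists_length_eq[of "UNIV :: bool set" m] by (simp add: bits_def)

lemma card_bits: "card (bits m) = 2 ^ m"
  using card_lists_length_eq[of "UNIV :: bool set" m] by (simp add: bits_def)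

lemma bits_nonempty [simp]: "bits m \<noteq> {}"
  by (auto simp: bits_def intro!: exI[of _ "replicate m False"])

lemma matrices_eq_lists_bits: "matrices k n = {A. set A \<subseteq> bits n \<and> length A = k}"
  by (auto simp: matrices_def bits_def)

lemma finite_matrices [simp]: "finite (matrices k n)"
  unfolding matrices_eq_lists_bits by (rule finite_lists_length_eq) simp

lemma matrices_nonempty [simp]: "matrices k n \<noteq> {}"
  by (auto simp: matrices_def intro!: exI[of _ "replicate k (replicate n False)"])

lemma card_matrices: "card (matrices k n) = 2 ^ (k * n)"
  unfolding matrices_eq_lists_bits
  by (simp add: card_lists_length_eq card_bits power_mult[symmetric] mult.commute)

lemma length_concat_matrices: "A \<in> matrices k n \<Longrightarrow> length (concat A) = k * n"
  by (induction A arbitrary: k) (auto simp: matrices_def)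

lemma inj_on_concat_matrices: "inj_on concat (matrices k n)"
proof (induction k)
  case 0
  then show ?case by (simp add: matrices_def inj_on_def)
next
  case (Suc k)
  show ?case
  proof (rule inj_onI)
    fix A B assume "A \<in> matrices (Suc k) n" "B \<in> matrices (Suc k) n" "concat A = concat B"
    then obtain r R t T where "A = r # R" "B = t # T" "length r = n" "length t = n"
      "R \<in> matrices k n" "T \<in> matrices k n" "r @ concat R = t @ concat T"
      by (cases A; cases B) (auto simp: matrices_def)
    with Suc.IH show "A = B" by (auto dest: inj_onD)
  qed
qed

lemma inj_on_card_eq_bij_betw:
  assumes "inj_on f A" "f ` A \<subseteq> B" "card A = card B" "finite B"
  shows "bij_betw f A B"
  using assms by (metis bij_betw_def card_image card_subset_eq)

lemma pair_pmf_of_set: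
  assumes "finite A" "A \<noteq> {}" "finite B" "B \<noteq> {}"
  shows "pair_pmf (pmf_of_set A) (pmf_of_set B) = pmf_of_set (A \<times> B)"
proof (rule pmf_eqI)
  fix x :: "'a \<times> 'b"
  show "pmf (pair_pmf (pmf_of_set A) (pmf_of_set B)) x = pmf (pmf_of_set (A \<times> B)) x"
    using assms by (cases x) (auto simp: pmf_pair indicator_def card_cartesian_product)
qed

lemma cond_pmf_of_set:
  assumes "finite A" "A \<inter> X \<noteq> {}"
  shows "cond_pmf (pmf_of_set A) X = pmf_of_set (A \<inter> X)"
proof (rule pmf_eqI)
  fix x
  have "A \<noteq> {}" using assms by auto
  then show "pmf (cond_pmf (pmf_of_set A) X) x = pmf (pmf_of_set (A \<inter> X)) x"
    using assms by (auto simp: pmf_cond measure_pmf_of_set indicator_def Int_commute)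
qed

lemma cond_pair_pmf_fst:
  assumes "set_pmf P \<inter> X \<noteq> {}"
  shows "cond_pmf (pair_pmf P Q) (X \<times> UNIV) = pair_pmf (cond_pmf P X) Q"
proof (rule pmf_eqI)
  fix x :: "'a \<times> 'b"
  have nonempty: "set_pmf (pair_pmf P Q) \<inter> (X \<times> UNIV) \<noteq> {}"
    using assms set_pmf_not_empty[of Q] by auto
  have "measure (pair_pmf P Q) (X \<times> UNIV) = measure (map_pmf fst (pair_pmf P Q)) X"
    by (simp add: vimage_fst)
  then have "measure (pair_pmf P Q) (X \<times> UNIV) = measure P X"
    by (simp add: map_fst_pair_pmf)
  then show "pmf (cond_pmf (pair_pmf P Q) (X \<times> UNIV)) x = pmf (pair_pmf (cond_pmf P X) Q) x"
    using pmf_cond[OF nonempty] pmf_cond[OF assms] by (cases x) (simp add: pmf_pair)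
qed

lemma set_pmf_bern_list: "set_pmf (bern_list eta m) \<subseteq> bits m"
  by (induction m) (auto simp: bits_def)

lemma map_append_pmf_of_set_bits:
  "map_pmf (\<lambda>(x, y). x @ y) (pmf_of_set (bits a \<times> bits b)) = pmf_of_set (bits (a + b))"
proof (rule map_pmf_of_set_bij_betw)
  show "bij_betw (\<lambda>(x, y). x @ y) (bits a \<times> bits b) (bits (a + b))"
  proof (rule inj_on_card_eq_bij_betw)
    show "inj_on (\<lambda>(x, y). x @ y) (bits a \<times> bits b)"
      by (auto simp: inj_on_def bits_def)
    show "card (bits a \<times> bits b) = card (bits (a + b))"
      by (simp add: card_cartesian_product card_bits power_add)
    show "(\<lambda>(x, y). x @ y) ` (bits a \<times> bits b) \<subseteq> bits (a + b)"
      by (auto simp: bits_def)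
  qed simp
qed auto

lemma map_concat_pmf_of_set_matrices:
  "map_pmf concat (pmf_of_set (matrices k n)) = pmf_of_set (bits (k * n))"
proof (rule map_pmf_of_set_bij_betw)
  show "bij_betw concat (matrices k n) (bits (k * n))"
  proof (rule inj_on_card_eq_bij_betw[OF inj_on_concat_matrices])
    show "concat ` matrices k n \<subseteq> bits (k * n)"
      by (auto simp: length_concat_matrices bits_def)
  qed (simp_all add: card_matrices card_bits)
qed auto

lemma map_xor_pmf_of_set_bits:
  assumes "v \<in> bits m"
  shows "map_pmf (\<lambda>w. xor_bits w v) (pmf_of_set (bits m)) = pmf_of_set (bits m)"
proof (rule map_pmf_of_set_bij_betw)
  have cancel: "xor_bits (xor_bits w v) v = w" if "w \<in> bits m" for w
    by (rule xor_bits_cancel_right) (use assms that in \<open>simp add: bits_def\<close>)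
  show "bij_betw (\<lambda>w. xor_bits w v) (bits m) (bits m)"
    by (rule bij_betwI[where g = "\<lambda>w. xor_bits w v"])
       (use assms cancel in \<open>auto simp: bits_def\<close>)
qed auto

lemma length_fmap [simp]: "length (fmap g n p x) = n - p"
  by (simp add: fmap_def)

text \<open>The map \<open>f\<close> is triangular: \<open>x\<^sub>j\<close> is determined by \<open>y\<^sub>j\<close> and the later coordinates, so \<open>x\<close> is
  recovered from \<open>f(x)\<close> and its last \<open>p\<close> bits by back substitution.\<close>

lemma fmap_drop_inj:
  assumes "length u = n" "length u' = n" "fmap g n p u = fmap g n p u'"
    and "drop (n - p) u = drop (n - p) u'"
  shows "u = u'"
proof -
  have "u ! j = u' ! j" if "j < n" for j
    using that
  proof (induction "n - j" arbitrary: j rule: less_induct)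
    case less
    show ?case
    proof (cases "n - p \<le> j")
      case True
      then show ?thesis
        using arg_cong[OF assms(4), of "\<lambda>xs. xs ! (j - (n - p))"] assms(1,2) less.prems by simp
    next
      case False
      have "take p (drop (j + 1) u) = take p (drop (j + 1) u')"
        using assms(1,2) less by (intro nth_equalityI) (auto simp: add.assoc)
      moreover have "fmap g n p u ! j = fmap g n p u' ! j"
        using assms(3) by simp
      ultimately show ?thesis
        using False by (auto simp: fmap_def)
    qed
  qed
  then show ?thesis
    using assms(1,2) by (auto intro: nth_equalityI)
qed

lemma map_fmap_pmf_of_set_bits:
  assumes "p \<le> n"
  shows "map_pmf (fmap g n p) (pmf_of_set (bits n)) = pmf_of_set (bits (n - p))"
proof -
  let ?F = "\<lambda>u. (fmap g n p u, drop (n - p) u)"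
  have "bij_betw ?F (bits n) (bits (n - p) \<times> bits p)"
  proof (rule inj_on_card_eq_bij_betw)
    show "inj_on ?F (bits n)"
      by (auto simp: inj_on_def bits_def intro: fmap_drop_inj)
    show "?F ` bits n \<subseteq> bits (n - p) \<times> bits p"
      using assms by (auto simp: bits_def)
    show "card (bits n) = card (bits (n - p) \<times> bits p)"
      using assms by (simp add: card_cartesian_product card_bits power_add[symmetric])
  qed simp
  then have "map_pmf ?F (pmf_of_set (bits n)) = pmf_of_set (bits (n - p) \<times> bits p)"
    by (rule map_pmf_of_set_bij_betw) auto
  then have "map_pmf fst (map_pmf ?F (pmf_of_set (bits n))) = pmf_of_set (bits (n - p))"
    by (simp add: pair_pmf_of_set[symmetric] map_fst_pair_pmf)
  then show ?thesis
    by (simp add: map_pmf_comp)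
qed

lemma map_xor_pair_pmf_of_set_bits:
  assumes "set_pmf V \<subseteq> bits m"
  shows "map_pmf (\<lambda>(w, v). xor_bits w v) (pair_pmf (pmf_of_set (bits m)) V) = pmf_of_set (bits m)"
proof -
  have "map_pmf (\<lambda>(w, v). xor_bits w v) (pair_pmf (pmf_of_set (bits m)) V)
      = bind_pmf V (\<lambda>v. map_pmf (\<lambda>w. xor_bits w v) (pmf_of_set (bits m)))"
    unfolding pair_pmf_def map_pmf_def
    by (subst bind_commute_pmf) (simp add: bind_assoc_pmf bind_return_pmf)
  also have "\<dots> = bind_pmf V (\<lambda>_. pmf_of_set (bits m))"
    by (intro bind_pmf_cong refl map_xor_pmf_of_set_bits) (use assms in blast)
  finally show ?thesis
    by simp
qed

lemma odd_card_Collect_differ_at: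
  assumes "finite L" "i \<in> L" "\<And>l. l \<in> L \<Longrightarrow> l \<noteq> i \<Longrightarrow> P l = Q l"
  shows "odd (card {l \<in> L. P l}) = (odd (card {l \<in> L. Q l}) \<noteq> (P i \<noteq> Q i))"
proof -
  have split: "card {l \<in> L. R l} = card {l \<in> L - {i}. R l} + (if R i then 1 else 0)" for R
  proof -
    have "{l \<in> L. R l} = {l \<in> L - {i}. R l} \<union> (if R i then {i} else {})"
      using assms(2) by auto
    then show ?thesis
      using assms(1) by (auto simp: card_Un_disjoint)
  qed
  have "{l \<in> L - {i}. P l} = {l \<in> L - {i}. Q l}"
    using assms(3) by auto
  then show ?thesis
    using split[of P] split[of Q] by auto
qed

lemma length_vecmat [simp]: "length (vecmat n s A) = n"
  by (simp add: vecmat_def)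

lemma vecmat_update_row:
  assumes "i < length s" "s ! i" "i < length A" "length (A ! i) = n" "length c = n"
  shows "vecmat n s (A[i := xor_bits (A ! i) c]) = xor_bits (vecmat n s A) c"
proof (rule nth_equalityI)
  fix j assume "j < length (vecmat n s (A[i := xor_bits (A ! i) c]))"
  then have j: "j < n"
    by (simp add: vecmat_def)
  let ?A' = "A[i := xor_bits (A ! i) c]"
  have "odd (card {l \<in> {..<length s}. s ! l \<and> ?A' ! l ! j}) =
      (odd (card {l \<in> {..<length s}. s ! l \<and> A ! l ! j}) \<noteq>
        ((s ! i \<and> ?A' ! i ! j) \<noteq> (s ! i \<and> A ! i ! j)))"
    by (rule odd_card_Collect_differ_at) (use assms(1) in auto)
  moreover have "?A' ! i ! j = (A ! i ! j \<noteq> c ! j)"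
    using assms j by simp
  ultimately show "vecmat n s ?A' ! j = xor_bits (vecmat n s A) c ! j"
    using assms j by (simp add: vecmat_def) blast
qed (simp add: assms(5))

definition hyb_domain :: "nat \<Rightarrow> nat \<Rightarrow> nat \<Rightarrow> (bool list list \<times> bool list \<times> bool list) set" where
  "hyb_domain k n i = matrices k n \<times> {s \<in> bits k. s ! i} \<times> bits n"

definition swap_mask :: "nat \<Rightarrow> nat \<Rightarrow> bool list list \<times> bool list \<times> bool list \<Rightarrow>
    bool list list \<times> bool list \<times> bool list" where
  "swap_mask n i = (\<lambda>(A, s, c). (A[i := xor_bits (A ! i) c], s, vecmat n s A))"

lemma hyb_domain_nonempty:
  "i < k \<Longrightarrow> (replicate k (replicate n False), (replicate k False)[i := True], replicate n False)
    \<in> hyb_domain k n i"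
  by (auto simp: hyb_domain_def matrices_def bits_def)

lemma pmf_of_set_hyb_domain:
  assumes "i < k"
  shows "pmf_of_set (hyb_domain k n i) =
    pair_pmf (pmf_of_set (matrices k n)) (pair_pmf (pmf_of_set {s \<in> bits k. s ! i}) (pmf_of_set (bits n)))"
proof -
  have "{s \<in> bits k. s ! i} \<noteq> {}"
    using hyb_domain_nonempty[OF assms] by (auto simp: hyb_domain_def)
  then show ?thesis
    by (simp add: hyb_domain_def pair_pmf_of_set finite_cartesian_product)
qed

lemma map_swap_mask_pmf_of_set:
  assumes "i < k"
  shows "map_pmf (swap_mask n i) (pmf_of_set (hyb_domain k n i)) = pmf_of_set (hyb_domain k n i)"
proof -
  let ?T = "hyb_domain k n i"
  define unswap where "unswap = (\<lambda>(A', s, u).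
    let c = xor_bits (vecmat n s A') u in (A'[i := xor_bits (A' ! i) c], s, c))"
  have into: "swap_mask n i x \<in> ?T" and inverse: "unswap (swap_mask n i x) = x" if "x \<in> ?T" for x
  proof -
    obtain A s c where x: "x = (A, s, c)"
      by (cases x)
    have A: "A \<in> matrices k n" and s: "length s = k" "s ! i" and c: "length c = n"
      using that by (auto simp: hyb_domain_def bits_def x)
    have row: "length (A ! i) = n" "length A = k"
      using A assms by (auto simp: matrices_def)
    let ?A' = "A[i := xor_bits (A ! i) c]"
    have "?A' \<in> matrices k n"
      using A row c by (auto simp: matrices_def dest: set_update_subset_insert[THEN subsetD])
    then show "swap_mask n i x \<in> ?T"
      using that by (auto simp: swap_mask_def hyb_domain_def bits_def x)
    have "vecmat n s ?A' = xor_bits (vecmat n s A) c"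
      by (rule vecmat_update_row) (use s row c assms in simp_all)
    then have "xor_bits (vecmat n s ?A') (vecmat n s A) = c"
      by (simp only:) (rule xor_bits_cancel_left, simp add: c)
    moreover have "?A'[i := xor_bits (?A' ! i) c] = A"
    proof -
      have "?A' ! i = xor_bits (A ! i) c"
        using row assms by simp
      moreover have "xor_bits (xor_bits (A ! i) c) c = A ! i"
        by (rule xor_bits_cancel_right) (simp add: row c)
      ultimately show ?thesis
        by (simp only: list_update_overwrite list_update_id)
    qed
    ultimately show "unswap (swap_mask n i x) = x"
      by (simp add: unswap_def swap_mask_def x)
  qed
  have "bij_betw (swap_mask n i) ?T ?T"
  proof (rule inj_on_card_eq_bij_betw)
    show "inj_on (swap_mask n i) ?T"
      by (rule inj_on_inverseI[of _ unswap]) (rule inverse)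
    show "swap_mask n i ` ?T \<subseteq> ?T"
      using into by blast
  qed (simp_all add: hyb_domain_def finite_cartesian_product)
  then show ?thesis
    using hyb_domain_nonempty[OF assms]
    by (intro map_pmf_of_set_bij_betw) (auto simp: hyb_domain_def finite_cartesian_product)
qed

lemma joint_exp_eq_map_pair_pmf:
  "joint_exp eta k n D = map_pmf (\<lambda>((A, s, c), v). (A, s, v, c))
     (pair_pmf (pmf_of_set (matrices k n \<times> bits k \<times> bits n)) (bern_list eta D))"
proof -
  have "joint_exp eta k n D = map_pmf (\<lambda>((A, s, c), v). (A, s, v, c))
     (pair_pmf (pair_pmf (pmf_of_set (matrices k n)) (pair_pmf (pmf_of_set (bits k)) (pmf_of_set (bits n))))
       (bern_list eta D))"
    unfolding joint_exp_def pair_pmf_def map_pmf_def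
    by (simp add: bind_assoc_pmf bind_return_pmf bind_commute_pmf[of "bern_list eta D"])
  then show ?thesis
    by (simp add: pair_pmf_of_set finite_cartesian_product)
qed

lemma cond_joint_exp:
  assumes "i < k"
  shows "cond_pmf (joint_exp eta k n D) {(A, s, v, c). s ! i} = map_pmf (\<lambda>((A, s, c), v). (A, s, v, c))
     (pair_pmf (pmf_of_set (hyb_domain k n i)) (bern_list eta D))"
proof -
  let ?U = "matrices k n \<times> bits k \<times> bits n"
  let ?X = "{(A :: bool list list, s :: bool list, c :: bool list). s ! i}"
  let ?h = "\<lambda>((A :: bool list list, s :: bool list, c :: bool list), v :: bool list). (A, s, v, c)"
  have U: "finite ?U" "?U \<inter> ?X = hyb_domain k n i"
    by (auto simp: hyb_domain_def finite_cartesian_product)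
  then have meets: "set_pmf (pmf_of_set ?U) \<inter> ?X \<noteq> {}"
    using hyb_domain_nonempty[OF assms] by auto
  have "?h -` {(A, s, v, c). s ! i} = ?X \<times> UNIV"
    by auto
  moreover have "set_pmf (pair_pmf (pmf_of_set ?U) (bern_list eta D)) \<inter> ?X \<times> UNIV \<noteq> {}"
    using meets set_pmf_not_empty[of "bern_list eta D"] by auto
  ultimately show ?thesis
    using U meets
    by (simp add: joint_exp_eq_map_pair_pmf cond_map_pmf cond_pair_pmf_fst cond_pmf_of_set)
qed

lemma map_hyb_output_uniform:
  assumes "i < k" "p \<le> n"
  shows "map_pmf (\<lambda>((A, s, u), v). concat A @ xor_bits (fmap g n p u) v)
      (pair_pmf (pmf_of_set (hyb_domain k n i)) (bern_list eta (n - p)))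
    = pmf_of_set (bits (k * n + (n - p)))"
proof -
  let ?B = "bern_list eta (n - p)"
  let ?noisy = "map_pmf (\<lambda>(w, v). xor_bits w v) (pair_pmf (map_pmf (fmap g n p) (pmf_of_set (bits n))) ?B)"
  have "map_pmf (\<lambda>((A, s, u), v). concat A @ xor_bits (fmap g n p u) v)
      (pair_pmf (pmf_of_set (hyb_domain k n i)) ?B)
    = map_pmf (\<lambda>(x, y). x @ y) (pair_pmf (map_pmf concat (pmf_of_set (matrices k n))) ?noisy)"
    unfolding pmf_of_set_hyb_domain[OF assms(1)] pair_pmf_def map_pmf_def
    by (simp add: bind_assoc_pmf bind_return_pmf)
  also have "?noisy = pmf_of_set (bits (n - p))"
    unfolding map_fmap_pmf_of_set_bits[OF assms(2)]
    by (rule map_xor_pair_pmf_of_set_bits[OF set_pmf_bern_list])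
  finally show ?thesis
    by (simp add: map_concat_pmf_of_set_matrices pair_pmf_of_set map_append_pmf_of_set_bits)
qed

theorem lemma1:
  fixes eta :: real and g :: "bool list \<Rightarrow> bool" and k n p i :: nat
  assumes "0 < p" and "p < n"
    and "nonlinear_anf p g"
    and "0 \<le> eta" and "eta \<le> 1"
    and "i < k"
  shows "hyb_given_si eta g k n p i = pmf_of_set (bits (k * n + (n - p)))"
proof -
  let ?T = "pair_pmf (pmf_of_set (hyb_domain k n i)) (bern_list eta (n - p))"
  let ?output = "\<lambda>((A, s, u), v). concat A @ xor_bits (fmap g n p u) v"
  have "hyb_out g n p i \<circ> (\<lambda>((A, s, c), v). (A, s, v, c)) = ?output \<circ> apfst (swap_mask n i)"
    by (auto simp: hyb_out_def swap_mask_def)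
  then have "hyb_given_si eta g k n p i = map_pmf ?output (map_pmf (apfst (swap_mask n i)) ?T)"
    by (simp add: hyb_given_si_def cond_joint_exp[OF assms(6)] map_pmf_comp o_def)
  also have "map_pmf (apfst (swap_mask n i)) ?T = ?T"
    by (simp add: pair_map_pmf1[symmetric] map_swap_mask_pmf_of_set[OF assms(6)])
  also have "map_pmf ?output ?T = pmf_of_set (bits (k * n + (n - p)))"
    using assms(2,6) by (intro map_hyb_output_uniform) simp_all
  finally show ?thesis .
qed

end
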